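(* Let $G$ be a graph, $\boldsymbol{\gamma}\in\mathbb{N}_{\ge0}^{V(G)}$ any vector, $R\in\mathbb{N}_{\ge0}$ and $\phi,\psi\in(0,1)$. If there exists a graph $W$ with embedding $\Pi_{W\mapsto G}$ that is an $(R,\phi,\psi)$-witness of $(G,\boldsymbol{0})$ with respect to $\boldsymbol{\gamma}$, then $G$ is a $\psi^2\phi$-expander.
   Context: Graphs are directed unweighted multigraphs (self-loops allowed); $\deg_G(v)$ counts incident edges with a self-loop counting $2$; $\mathrm{vol}_G(S)=\sum_{v\in S}\deg_G(v)$; for $S\subseteq V$, $\overline{S}=V\setminus S$, $E_G(S,\overline{S})$ is the set of edges with tail in $S$ and head in $\overline{S}$; $\overleftarrow{G}$ is $G$ with edges reversed; for a vector $\boldsymbol{r}$, $\boldsymbol{r}(S)=\sum_{s\in S}\boldsymbol{r}(s)$. A cut $(S,\overline{S})$ is $\phi$-out-sparse if $\mathrm{vol}_G(S)\le\mathrm{vol}_G(\overline{S})$ and $|E_G(S,\overline{S})|<\phi\,\mathrm{vol}_G(S)$; $G$ is a $\phi$-expander if neither $G$ nor $\overleftarrow{G}$ has a $\phi$-out-sparse cut. An embedding $\Pi_{W\mapsto G}$ of a graph $W$ on the same vertex set as $G$ maps each edge $(u,v)$ of $W$ to a $u$-to-$v$ path in $G$; its congestion is the maximum over $e\in E(G)$ of the number of edges of $W$ whose path contains $e$. Given $\boldsymbol{r},\boldsymbol{\gamma}\in\mathbb{N}_{\ge0}^{V(G)}$, $\phi,\psi\in(0,1)$, $R\in\mathbb{N}_{\ge0}$,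 $(W,\Pi_{W\mapsto G})$ is an $(R,\phi,\psi)$-out-witness of $(G,\boldsymbol{r})$ w.r.t. $\boldsymbol{\gamma}$ if (1) $\|\boldsymbol{r}\|_1\le R$; (2) for every $v$, $\deg_W(v)+\boldsymbol{r}(v)\in[\deg_G(v),\frac{1}{\psi}\deg_G(v)]$; (3) for every $S\subseteq V$ with $\boldsymbol{\gamma}(S)\le\boldsymbol{\gamma}(\overline{S})$, $|E_W(S,\overline{S})|+\boldsymbol{r}(S)\ge\psi(\mathrm{vol}_W(S)+\boldsymbol{r}(S))$; (4) $\Pi_{W\mapsto G}$ has congestion at most $\frac{1}{\psi\phi}$. It is an $(R,\phi,\psi)$-witness if moreover $\overleftarrow{W}$ (with the reversed paths) is an $(R,\phi,\psi)$-out-witness of $(\overleftarrow{G},\boldsymbol{r})$ w.r.t. $\boldsymbol{\gamma}$. *)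

theory Defs
  imports "HOL-Analysis.Analysis" "Graph_Theory.Digraph" "Graph_Theory.Arc_Walk"
begin

definition deg :: "('a,'b) pre_digraph \<Rightarrow> 'a \<Rightarrow> nat" where
  "deg G v = in_degree G v + out_degree G v"   (* a self-loop counts 2 *)

definition vol :: "('a,'b) pre_digraph \<Rightarrow> 'a set \<Rightarrow> nat" where
  "vol G S = (\<Sum>v\<in>S. deg G v)"

definition cut_arcs :: "('a,'b) pre_digraph \<Rightarrow> 'a set \<Rightarrow> 'b set" where
  "cut_arcs G S = {e \<in> arcs G. tail G e \<in> S \<and> head G e \<in> verts G - S}"

definition rev_graph :: "('a,'b) pre_digraph \<Rightarrow> ('a,'b) pre_digraph" where
  "rev_graph G = \<lparr>verts = verts G, arcs = arcs G, tail = head G, head = tail G\<rparr>"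

definition out_sparse_cut :: "('a,'b) pre_digraph \<Rightarrow> real \<Rightarrow> 'a set \<Rightarrow> bool" where
  "out_sparse_cut G \<phi> S \<longleftrightarrow> S \<subseteq> verts G \<and> vol G S \<le> vol G (verts G - S)
     \<and> real (card (cut_arcs G S)) < \<phi> * real (vol G S)"

definition is_expander :: "('a,'b) pre_digraph \<Rightarrow> real \<Rightarrow> bool" where
  "is_expander G \<phi> \<longleftrightarrow> (\<nexists>S. out_sparse_cut G \<phi> S) \<and> (\<nexists>S. out_sparse_cut (rev_graph G) \<phi> S)"

definition is_embedding ::
    "('a,'f) pre_digraph \<Rightarrow> ('a,'e) pre_digraph \<Rightarrow> ('f \<Rightarrow> 'e list) \<Rightarrow> bool" where
  "is_embedding W G Pi_emb \<longleftrightarrow> verts W = verts G \<and>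
     (\<forall>f\<in>arcs W. pre_digraph.apath G (tail W f) (Pi_emb f) (head W f))"

definition congestion ::
    "('a,'f) pre_digraph \<Rightarrow> ('a,'e) pre_digraph \<Rightarrow> ('f \<Rightarrow> 'e list) \<Rightarrow> nat" where
  "congestion W G Pi_emb = Max ({card {f \<in> arcs W. e \<in> set (Pi_emb f)} | e. e \<in> arcs G} \<union> {0})"

definition out_witness ::
    "('a,'e) pre_digraph \<Rightarrow> ('a \<Rightarrow> nat) \<Rightarrow> ('a \<Rightarrow> nat) \<Rightarrow> nat \<Rightarrow> real \<Rightarrow> real
     \<Rightarrow> ('a,'f) pre_digraph \<Rightarrow> ('f \<Rightarrow> 'e list) \<Rightarrow> bool" where
  "out_witness G r \<gamma> R \<phi> \<psi> W Pi_emb \<longleftrightarrow>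
     is_embedding W G Pi_emb \<and>
     (\<Sum>v\<in>verts G. r v) \<le> R \<and>
     (\<forall>v\<in>verts G. deg G v \<le> deg W v + r v \<and> real (deg W v + r v) \<le> real (deg G v) / \<psi>) \<and>
     (\<forall>S\<subseteq>verts G. sum \<gamma> S \<le> sum \<gamma> (verts G - S) \<longrightarrow>
        real (card (cut_arcs W S)) + real (sum r S) \<ge> \<psi> * (real (vol W S) + real (sum r S))) \<and>
     real (congestion W G Pi_emb) \<le> 1 / (\<psi> * \<phi>)"

definition witness ::
    "('a,'e) pre_digraph \<Rightarrow> ('a \<Rightarrow> nat) \<Rightarrow> ('a \<Rightarrow> nat) \<Rightarrow> nat \<Rightarrow> real \<Rightarrow> real
     \<Rightarrow> ('a,'f) pre_digraph \<Rightarrow> ('f \<Rightarrow> 'e list) \<Rightarrow> bool" where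
  "witness G r \<gamma> R \<phi> \<psi> W Pi_emb \<longleftrightarrow>
     out_witness G r \<gamma> R \<phi> \<psi> W Pi_emb \<and>
     out_witness (rev_graph G) r \<gamma> R \<phi> \<psi> (rev_graph W) (\<lambda>f. rev (Pi_emb f))"

end

theory Submission
  imports Defs
begin

text \<open>Let \<open>S\<close> be a cut with \<open>vol\<^sub>G(S) \<le> vol\<^sub>G(V - S)\<close>. Property (3) of the witness, applied to
  \<open>S\<close> in \<open>W\<close> or to \<open>V - S\<close> in the reversed witness (whichever side has the smaller \<open>\<gamma>\<close>-weight),
  together with \<open>deg\<^sub>W \<ge> deg\<^sub>G\<close>, shows that at least \<open>\<psi> vol\<^sub>G(S)\<close> arcs of \<open>W\<close> leave \<open>S\<close>.
  The path of each of them leaves \<open>S\<close> through an arc of \<open>G\<close>, and every arc of \<open>G\<close> is used by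
  at most \<open>1/(\<psi>\<phi>)\<close> such paths, so at least \<open>\<psi>\<^sup>2\<phi> vol\<^sub>G(S)\<close> arcs of \<open>G\<close> leave \<open>S\<close>.
  The same argument for the reversed graph handles in-sparse cuts.\<close>

lemma deg_rev_graph [simp]: "deg (rev_graph G) v = deg G v"
  unfolding deg_def rev_graph_def in_degree_def out_degree_def in_arcs_def out_arcs_def by simp

lemma vol_rev_graph [simp]: "vol (rev_graph G) S = vol G S"
  unfolding vol_def by simp

lemma rev_graph_rev_graph [simp]: "rev_graph (rev_graph G) = G"
  unfolding rev_graph_def by simp

lemma fin_digraph_rev_graph: "fin_digraph G \<Longrightarrow> fin_digraph (rev_graph G)"
  unfolding fin_digraph_def fin_digraph_axioms_def wf_digraph_def rev_graph_def by auto

lemma (in wf_digraph) cut_arcs_rev_graph_complement: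
  assumes "S \<subseteq> verts G"
  shows "cut_arcs (rev_graph G) (verts G - S) = cut_arcs G S"
  using assms unfolding cut_arcs_def rev_graph_def by auto

lemma (in wf_digraph) awalk_crosses_cut:
  assumes "awalk u p v" "u \<in> S" "v \<notin> S"
  shows "\<exists>e\<in>set p. e \<in> cut_arcs G S"
  using assms
proof (induction p arbitrary: u)
  case Nil
  then show ?case by (simp add: awalk_Nil_iff)
next
  case (Cons e es)
  then have e: "e \<in> arcs G" "tail G e = u" and es: "awalk (head G e) es v"
    by (auto simp: awalk_Cons_iff)
  show ?case
  proof (cases "head G e \<in> S")
    case True
    then show ?thesis using Cons.IH[OF es] Cons.prems by auto
  next
    case False
    then have "e \<in> cut_arcs G S" using e \<open>u \<in> S\<close> unfolding cut_arcs_def by auto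
    then show ?thesis by auto
  qed
qed

lemma arc_load_le_congestion:
  assumes "finite (arcs G)" "e \<in> arcs G"
  shows "card {f \<in> arcs W. e \<in> set (Pi_emb f)} \<le> congestion W G Pi_emb"
  unfolding congestion_def by (rule Max_ge) (use assms in auto)

lemma card_cut_arcs_le_congestion:
  assumes "fin_digraph G" "finite (arcs W)" "is_embedding W G Pi_emb"
  shows "card (cut_arcs W S) \<le> congestion W G Pi_emb * card (cut_arcs G S)"
proof -
  interpret G: fin_digraph G by fact
  let ?load = "\<lambda>e. {f \<in> arcs W. e \<in> set (Pi_emb f)}"
  have fin_cut: "finite (cut_arcs G S)" unfolding cut_arcs_def by simp
  have "cut_arcs W S \<subseteq> (\<Union>e\<in>cut_arcs G S. ?load e)"
  proof
    fix f assume f: "f \<in> cut_arcs W S"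
    then have "G.awalk (tail W f) (Pi_emb f) (head W f)" "head W f \<notin> S" "tail W f \<in> S"
      using assms(3) unfolding cut_arcs_def is_embedding_def G.apath_def by auto
    then obtain e where "e \<in> set (Pi_emb f)" "e \<in> cut_arcs G S"
      using G.awalk_crosses_cut by blast
    with f show "f \<in> (\<Union>e\<in>cut_arcs G S. ?load e)" unfolding cut_arcs_def by auto
  qed
  then have "card (cut_arcs W S) \<le> card (\<Union>e\<in>cut_arcs G S. ?load e)"
    by (intro card_mono) (use assms(2) fin_cut in auto)
  also have "\<dots> \<le> (\<Sum>e\<in>cut_arcs G S. card (?load e))"
    by (rule card_UN_le[OF fin_cut])
  also have "\<dots> \<le> (\<Sum>e\<in>cut_arcs G S. congestion W G Pi_emb)"
    by (intro sum_mono arc_load_le_congestion) (auto simp: cut_arcs_def)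
  finally show ?thesis by (simp add: mult.commute)
qed

lemma out_witness_vol_le:
  assumes "out_witness G (\<lambda>_. 0) \<gamma> R \<phi> \<psi> W Pi_emb" "T \<subseteq> verts G"
  shows "vol G T \<le> vol W T"
  using assms unfolding out_witness_def vol_def by (auto intro: sum_mono)

lemma out_witness_expansion:
  assumes "out_witness G (\<lambda>_. 0) \<gamma> R \<phi> \<psi> W Pi_emb" "S \<subseteq> verts G"
    and "sum \<gamma> S \<le> sum \<gamma> (verts G - S)"
  shows "\<psi> * vol W S \<le> card (cut_arcs W S)"
  using assms unfolding out_witness_def by auto

lemma witness_cut_arcs_lower_bound:
  assumes "wf_digraph W" "0 < \<psi>"
    and out: "out_witness G (\<lambda>_. 0) \<gamma> R \<phi> \<psi> W Pi_emb"
    and rev_out: "out_witness (rev_graph G) (\<lambda>_. 0) \<gamma> R \<phi> \<psi> (rev_graph W) Pi_emb'"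
    and S: "S \<subseteq> verts G" "vol G S \<le> vol G (verts G - S)"
  shows "\<psi> * vol G S \<le> card (cut_arcs W S)"
proof -
  interpret W: wf_digraph W by fact
  have verts_eq: "verts W = verts G"
    using out unfolding out_witness_def is_embedding_def by simp
  show ?thesis
  proof (cases "sum \<gamma> S \<le> sum \<gamma> (verts G - S)")
    case True
    have "\<psi> * vol G S \<le> \<psi> * vol W S"
      using out_witness_vol_le[OF out S(1)] \<open>0 < \<psi>\<close> by simp
    also have "\<dots> \<le> card (cut_arcs W S)"
      using out_witness_expansion[OF out S(1) True] .
    finally show ?thesis .
  next
    case False
    have co_S: "verts G - (verts G - S) = S" using S(1) by auto
    have rev_verts: "verts (rev_graph G) = verts G" by (simp add: rev_graph_def)
    have "\<psi> * vol G S \<le> \<psi> * vol G (verts G - S)"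
      using S(2) \<open>0 < \<psi>\<close> by simp
    also have "\<dots> \<le> \<psi> * vol (rev_graph W) (verts G - S)"
      using out_witness_vol_le[OF rev_out] \<open>0 < \<psi>\<close> by (simp add: rev_verts)
    also have "\<dots> \<le> card (cut_arcs (rev_graph W) (verts G - S))"
      using out_witness_expansion[OF rev_out] False by (simp add: rev_verts co_S)
    also have "\<dots> = card (cut_arcs W S)"
      using W.cut_arcs_rev_graph_complement S(1) verts_eq by simp
    finally show ?thesis .
  qed
qed

lemma witness_no_out_sparse_cut:
  assumes "fin_digraph G" "fin_digraph W" "0 < \<phi>" "0 < \<psi>"
    and out: "out_witness G (\<lambda>_. 0) \<gamma> R \<phi> \<psi> W Pi_emb"
    and rev_out: "out_witness (rev_graph G) (\<lambda>_. 0) \<gamma> R \<phi> \<psi> (rev_graph W) Pi_emb'"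
  shows "\<not> out_sparse_cut G (\<psi>\<^sup>2 * \<phi>) S"
proof
  assume "out_sparse_cut G (\<psi>\<^sup>2 * \<phi>) S"
  then have S: "S \<subseteq> verts G" "vol G S \<le> vol G (verts G - S)"
    and sparse: "card (cut_arcs G S) < \<psi>\<^sup>2 * \<phi> * vol G S"
    unfolding out_sparse_cut_def by auto
  have emb: "is_embedding W G Pi_emb" and cong: "congestion W G Pi_emb * (\<psi> * \<phi>) \<le> 1"
    using out \<open>0 < \<phi>\<close> \<open>0 < \<psi>\<close> unfolding out_witness_def by (auto simp: field_simps)
  have wf_W: "wf_digraph W" and fin_W: "finite (arcs W)"
    using \<open>fin_digraph W\<close> by (auto simp: fin_digraph_def fin_digraph.finite_arcs)
  have "\<psi>\<^sup>2 * \<phi> * vol G S = \<psi> * \<phi> * (\<psi> * vol G S)"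
    by (simp add: power2_eq_square)
  also have "\<dots> \<le> \<psi> * \<phi> * card (cut_arcs W S)"
    using witness_cut_arcs_lower_bound[OF wf_W \<open>0 < \<psi>\<close> out rev_out S] \<open>0 < \<phi>\<close> \<open>0 < \<psi>\<close>
    by simp
  also have "\<dots> \<le> \<psi> * \<phi> * (congestion W G Pi_emb * card (cut_arcs G S))"
    using card_cut_arcs_le_congestion[OF \<open>fin_digraph G\<close> fin_W emb, of S] \<open>0 < \<phi>\<close> \<open>0 < \<psi>\<close>
    by (simp flip: of_nat_mult)
  also have "\<dots> = (congestion W G Pi_emb * (\<psi> * \<phi>)) * card (cut_arcs G S)"
    by simp
  also have "\<dots> \<le> card (cut_arcs G S)"
    using mult_right_mono[OF cong, of "card (cut_arcs G S)"] by simp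
  finally show False using sparse by simp
qed

theorem mainTheorem2:
  fixes G :: "('a,'e) pre_digraph" and \<gamma> :: "'a \<Rightarrow> nat" and R :: nat and \<phi> \<psi> :: real
  assumes "fin_digraph G"
    and "0 < \<phi>" "\<phi> < 1" "0 < \<psi>" "\<psi> < 1"
    and "\<exists>(W :: ('a,'f) pre_digraph) Pi_emb. fin_digraph W \<and> witness G (\<lambda>_. 0) \<gamma> R \<phi> \<psi> W Pi_emb"
  shows "is_expander G (\<psi>^2 * \<phi>)"
proof -
  obtain W :: "('a,'f) pre_digraph" and Pi_emb where "fin_digraph W"
    and out: "out_witness G (\<lambda>_. 0) \<gamma> R \<phi> \<psi> W Pi_emb"
    and rev_out: "out_witness (rev_graph G) (\<lambda>_. 0) \<gamma> R \<phi> \<psi> (rev_graph W) (\<lambda>f. rev (Pi_emb f))"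
    using assms(6) unfolding witness_def by blast
  have "\<not> out_sparse_cut G (\<psi>\<^sup>2 * \<phi>) S" for S
    using witness_no_out_sparse_cut[OF assms(1) \<open>fin_digraph W\<close> assms(2,4) out rev_out] .
  moreover have "\<not> out_sparse_cut (rev_graph G) (\<psi>\<^sup>2 * \<phi>) S" for S
    using witness_no_out_sparse_cut[OF fin_digraph_rev_graph[OF assms(1)]
        fin_digraph_rev_graph[OF \<open>fin_digraph W\<close>] assms(2,4) rev_out] out
    by simp
  ultimately show ?thesis unfolding is_expander_def by blast
qed

end
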